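(* Let $A=[a_1,\dots,a_N]\in\mathbb{C}^{n\times N}$ be a random matrix with i.i.d. entries distributed as $N(0,1)+iN(0,1)$, let $x_0\in\mathbb{C}^n$ with $\|x_0\|=1$, and $b(j)=|a_j^*x_0|$, $j=1,\dots,N$. Let $I\subset\{1,\dots,N\}$ with complement $I_c$ be such that $b(i)\le b(j)$ for all $i\in I$, $j\in I_c$, let $A_I$ be the submatrix of $A$ with columns $\{a_i\}_{i\in I}$, $b_I=(b(i))_{i\in I}$, and let $x_{\rm null}\in\arg\min\{\|A_I^*x\|^2:x\in\mathbb{C}^n,\ \|x\|=\|x_0\|\}$. Then there exists $x_\perp\in\mathbb{C}^n$ with $x_\perp^*x_0=0$ and $\|x_\perp\|=\|x_0\|=1$ such that \[ \frac14\|x_0x_0^*-x_{\rm null}x_{\rm null}^*\|^2\le\frac{\|b_I\|^2}{\|A_I^*x_\perp\|^2}. \]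
   Context: $\|\cdot\|$ is the Euclidean norm on vectors and the Frobenius norm on matrices; $A^*$ denotes conjugate transpose. $x_{\rm null}$ is a least singular vector of $A_I^*$ (defined up to a global phase); the left-hand side does not depend on this phase. *)

theory Defs
  imports "HOL-Probability.Probability"
begin

definition cdot :: "complex^'n \<Rightarrow> complex^'n \<Rightarrow> complex" where
  "cdot a x = (\<Sum>k\<in>UNIV. cnj (a $ k) * x $ k)"

definition frob_diff :: "complex^'n \<Rightarrow> complex^'n \<Rightarrow> real" where
  "frob_diff x y = sqrt (\<Sum>k\<in>UNIV. \<Sum>l\<in>UNIV.
      (cmod (x $ k * cnj (x $ l) - y $ k * cnj (y $ l)))\<^sup>2)"

text \<open>Sample space: independent standard real Gaussians indexed by
  (column j < N, row k, real/imaginary part).\<close>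
definition gauss_space :: "nat \<Rightarrow> (nat \<times> 'n \<times> bool \<Rightarrow> real) measure" where
  "gauss_space N = PiM ({..<N} \<times> (UNIV :: 'n set) \<times> (UNIV :: bool set))
                     (\<lambda>_. density lborel std_normal_density)"

definition col :: "(nat \<times> 'n \<times> bool \<Rightarrow> real) \<Rightarrow> nat \<Rightarrow> complex^'n" where
  "col \<omega> j = (\<chi> k. Complex (\<omega> (j, k, True)) (\<omega> (j, k, False)))"

definition bvec :: "(nat \<times> 'n \<times> bool \<Rightarrow> real) \<Rightarrow> complex^'n \<Rightarrow> nat \<Rightarrow> real" where
  "bvec \<omega> x0 j = cmod (cdot (col \<omega> j) x0)"

definition AIx_sq :: "(nat \<times> 'n \<times> bool \<Rightarrow> real) \<Rightarrow> nat set \<Rightarrow> complex^'n \<Rightarrow> real" where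
  "AIx_sq \<omega> I x = (\<Sum>i\<in>I. (cmod (cdot (col \<omega> i) x))\<^sup>2)"

end

theory Submission
  imports Defs
begin

text \<open>Write x_null = alpha x0 + beta xp with xp a unit vector orthogonal to x0; then
  the Frobenius distance satisfies |x0 x0^* - x_null x_null^*|^2 = 2 beta^2. A minimizer of
  |A_I^* x| on the unit sphere is an eigenvector of A_I A_I^* for the least eigenvalue, and
  expanding x0 and xp along x_null and its orthogonal complement gives
  beta^2 |A_I^* xp|^2 <= |A_I^* x0|^2 = |b_I|^2. If A_I^* xp = 0 the quotient degenerates and xp
  is tilted towards a unit vector e orthogonal to x0, fixed in advance; almost surely no Gaussian
  column is orthogonal to x0 or to e, so A_I^* x0 and A_I^* e do not vanish.\<close>

lemma inner_eq_Re_cdot: "inner u v = Re (cdot u v)"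
  by (simp add: inner_vec_def cdot_def inner_complex_def Re_sum)

lemma cdot_self: "cdot x x = of_real ((norm x)\<^sup>2)"
proof -
  have "cdot x x = (\<Sum>k\<in>UNIV. of_real ((cmod (x $ k))\<^sup>2))"
    unfolding cdot_def by (intro sum.cong refl) (metis complex_norm_square mult.commute)
  then show ?thesis by (simp add: norm_vec_def L2_set_def sum_nonneg)
qed

lemma cnj_cdot: "cnj (cdot u v) = cdot v u"
  by (simp add: cdot_def mult.commute)

lemma cdot_add_right: "cdot a (x + y) = cdot a x + cdot a y"
  by (simp add: cdot_def sum.distrib distrib_left)

lemma cdot_add_left: "cdot (x + y) a = cdot x a + cdot y a"
  by (simp add: cdot_def sum.distrib distrib_right)

lemma cdot_diff_right: "cdot a (x - y) = cdot a x - cdot a y"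
  by (simp add: cdot_def sum_subtractf right_diff_distrib)

lemma cdot_smult_right: "cdot a (c *s x) = c * cdot a x"
  by (simp add: cdot_def sum_distrib_left algebra_simps)

lemma cdot_smult_left: "cdot (c *s x) a = cnj c * cdot x a"
  by (simp add: cdot_def sum_distrib_left algebra_simps)

lemma cdot_scaleR_right: "cdot a (t *\<^sub>R x) = of_real t * cdot a x"
  unfolding cdot_def sum_distrib_left vector_scaleR_component
  by (simp add: scaleR_conv_of_real algebra_simps)

lemma cdot_scaleR_left: "cdot (t *\<^sub>R x) a = of_real t * cdot x a"
  unfolding cdot_def sum_distrib_left vector_scaleR_component
  by (simp add: scaleR_conv_of_real algebra_simps)

lemma norm_smult_vec: "norm (c *s (x :: complex^'n)) = cmod c * norm x"
  unfolding norm_vec_def by (simp add: L2_set_right_distrib norm_mult)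

lemma exists_unit_cdot_eq_0:
  fixes x0 :: "complex^'n"
  assumes "CARD('n) \<ge> 2" and "x0 \<noteq> 0"
  obtains e where "cdot e x0 = 0" and "norm e = 1"
proof -
  obtain k1 where k1: "x0 $ k1 \<noteq> 0" using \<open>x0 \<noteq> 0\<close> by (metis vec_eq_iff zero_index)
  have "UNIV \<noteq> {k1}"
  proof
    assume UNIV: "UNIV = {k1}"
    have "CARD('n) = 1" by (subst UNIV) simp
    with assms(1) show False by simp
  qed
  then obtain k2 where k2: "k2 \<noteq> k1" by auto
  define e where "e = (\<chi> k. if k = k1 then cnj (x0 $ k2) else if k = k2 then - cnj (x0 $ k1) else 0)"
  have "cdot e x0 = (\<Sum>k\<in>UNIV. (if k = k1 then x0 $ k2 * x0 $ k1 else 0)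
      - (if k = k2 then x0 $ k1 * x0 $ k2 else 0))"
    unfolding cdot_def e_def using k2 by (intro sum.cong refl) auto
  then have "cdot e x0 = 0" by (simp add: sum_subtractf mult.commute)
  moreover have "e \<noteq> 0"
    using k1 k2 by (auto simp: e_def vec_eq_iff)
  ultimately show ?thesis
    using that[of "(1 / norm e) *\<^sub>R e"] by (simp add: cdot_scaleR_left)
qed

text \<open>With the columns a i for i in I forming A_I, sesq_form a I u v is u^* A_I A_I^* v.\<close>

definition sesq_form :: "('i \<Rightarrow> complex^'n) \<Rightarrow> 'i set \<Rightarrow> complex^'n \<Rightarrow> complex^'n \<Rightarrow> complex"
  where "sesq_form a I u v = (\<Sum>i\<in>I. cnj (cdot (a i) u) * cdot (a i) v)"

definition quad_form :: "('i \<Rightarrow> complex^'n) \<Rightarrow> 'i set \<Rightarrow> complex^'n \<Rightarrow> real"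
  where "quad_form a I u = (\<Sum>i\<in>I. (cmod (cdot (a i) u))\<^sup>2)"

definition quad_form_minimizer :: "('i \<Rightarrow> complex^'n) \<Rightarrow> 'i set \<Rightarrow> complex^'n \<Rightarrow> bool"
  where "quad_form_minimizer a I x \<longleftrightarrow>
    norm x = 1 \<and> (\<forall>y. norm y = 1 \<longrightarrow> quad_form a I x \<le> quad_form a I y)"

lemma sesq_form_self: "sesq_form a I u u = of_real (quad_form a I u)"
  unfolding sesq_form_def quad_form_def of_real_sum
  by (intro sum.cong refl) (metis complex_norm_square mult.commute)

lemma cnj_sesq_form: "cnj (sesq_form a I u v) = sesq_form a I v u"
  by (simp add: sesq_form_def mult.commute)

lemma sesq_form_add_left: "sesq_form a I (x + y) u = sesq_form a I x u + sesq_form a I y u"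
  by (simp add: sesq_form_def cdot_add_right distrib_right sum.distrib)

lemma sesq_form_add_right: "sesq_form a I u (x + y) = sesq_form a I u x + sesq_form a I u y"
  by (simp add: sesq_form_def cdot_add_right distrib_left sum.distrib)

lemma sesq_form_smult_left: "sesq_form a I (c *s x) u = cnj c * sesq_form a I x u"
  by (simp add: sesq_form_def cdot_smult_right sum_distrib_left algebra_simps)

lemma sesq_form_smult_right: "sesq_form a I u (c *s x) = c * sesq_form a I u x"
  by (simp add: sesq_form_def cdot_smult_right sum_distrib_left algebra_simps)

lemma sesq_form_scaleR_left: "sesq_form a I (t *\<^sub>R x) u = of_real t * sesq_form a I x u"
  by (simp add: sesq_form_def cdot_scaleR_right sum_distrib_left algebra_simps)

lemma sesq_form_scaleR_right: "sesq_form a I u (t *\<^sub>R x) = of_real t * sesq_form a I u x"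
  by (simp add: sesq_form_def cdot_scaleR_right sum_distrib_left algebra_simps)

lemma quad_form_nonneg: "quad_form a I u \<ge> 0"
  by (simp add: quad_form_def sum_nonneg)

lemma quad_form_pos:
  assumes "finite I" and "i \<in> I" and "cdot (a i) u \<noteq> 0"
  shows "quad_form a I u > 0"
proof -
  have "0 < (cmod (cdot (a i) u))\<^sup>2" using assms(3) by simp
  also have "\<dots> \<le> quad_form a I u"
    unfolding quad_form_def using assms(1,2) by (intro member_le_sum) auto
  finally show ?thesis .
qed

lemma quad_form_smult: "quad_form a I (c *s x) = (cmod c)\<^sup>2 * quad_form a I x"
  by (simp add: quad_form_def cdot_smult_right sum_distrib_left power_mult_distrib norm_mult)

lemma quad_form_scaleR: "quad_form a I (t *\<^sub>R x) = t\<^sup>2 * quad_form a I x"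
  by (simp add: quad_form_def cdot_scaleR_right sum_distrib_left power_mult_distrib norm_mult)

lemma quad_form_add_le: "quad_form a I (u + v) \<le> 2 * quad_form a I u + 2 * quad_form a I v"
proof -
  have "(cmod (z + w))\<^sup>2 \<le> 2 * (cmod z)\<^sup>2 + 2 * (cmod w)\<^sup>2" for z w :: complex
  proof -
    have "(cmod (z + w))\<^sup>2 \<le> (cmod z + cmod w)\<^sup>2"
      by (rule power_mono[OF norm_triangle_ineq]) simp
    also have "\<dots> \<le> 2 * (cmod z)\<^sup>2 + 2 * (cmod w)\<^sup>2"
      using sum_squares_bound[of "cmod z" "cmod w"] by (simp add: power2_sum)
    finally show ?thesis .
  qed
  then show ?thesis
    unfolding quad_form_def cdot_add_right sum_distrib_left sum.distrib[symmetric]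
    by (intro sum_mono)
qed

lemma quad_form_add_scaleR:
  "quad_form a I (x + t *\<^sub>R y) = quad_form a I x + 2 * t * Re (sesq_form a I x y) + t\<^sup>2 * quad_form a I y"
proof -
  have "of_real (quad_form a I (x + t *\<^sub>R y)) = sesq_form a I (x + t *\<^sub>R y) (x + t *\<^sub>R y)"
    by (simp add: sesq_form_self)
  also have "\<dots> = sesq_form a I x x + of_real t * (sesq_form a I x y + cnj (sesq_form a I x y))
      + of_real t * of_real t * sesq_form a I y y"
    by (simp add: sesq_form_add_left sesq_form_add_right sesq_form_scaleR_left
        sesq_form_scaleR_right cnj_sesq_form algebra_simps)
  also have "sesq_form a I x y + cnj (sesq_form a I x y) = of_real (2 * Re (sesq_form a I x y))"
    by (simp add: complex_add_cnj)
  finally show ?thesis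
    by (simp add: sesq_form_self power2_eq_square flip: of_real_mult of_real_add)
qed

lemma power2_norm_add_scaleR:
  "(norm (x + t *\<^sub>R y))\<^sup>2 = (norm x)\<^sup>2 + 2 * t * Re (cdot x y) + t\<^sup>2 * (norm y)\<^sup>2"
  unfolding power2_norm_eq_inner inner_eq_Re_cdot[symmetric]
  by (simp add: inner_add inner_commute[of y x] power2_eq_square algebra_simps)

lemma linear_coeff_eq_0_if_quadratic_nonneg:
  fixes p q :: real
  assumes "\<And>t. 0 \<le> 2 * t * p + t\<^sup>2 * q"
  shows "p = 0"
proof (rule ccontr)
  assume "p \<noteq> 0"
  define t where "t = - p / (\<bar>q\<bar> + 1)"
  have p: "p = - t * (\<bar>q\<bar> + 1)" by (simp add: t_def add_pos_nonneg)
  then have "t \<noteq> 0" using \<open>p \<noteq> 0\<close> by auto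
  have "2 * t * p + t\<^sup>2 * q \<le> 2 * t * p + t\<^sup>2 * \<bar>q\<bar>"
    by (simp add: mult_left_mono)
  also have "\<dots> = - (t\<^sup>2 * (\<bar>q\<bar> + 2))"
    by (simp add: p algebra_simps power2_eq_square)
  also have "\<dots> < 0" using \<open>t \<noteq> 0\<close> by (simp add: add_nonneg_pos)
  finally show False using assms[of t] by simp
qed

lemma quad_form_minimizer_le:
  assumes "quad_form_minimizer a I x"
  shows "quad_form a I x * (norm y)\<^sup>2 \<le> quad_form a I y"
proof (cases "y = 0")
  case False
  then have "norm ((1 / norm y) *\<^sub>R y) = 1" by simp
  then have "quad_form a I x \<le> quad_form a I ((1 / norm y) *\<^sub>R y)"
    using assms by (simp add: quad_form_minimizer_def)
  also have "\<dots> = quad_form a I y / (norm y)\<^sup>2"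
    by (simp add: quad_form_scaleR power_divide)
  finally show ?thesis using False by (simp add: field_simps)
qed (simp add: quad_form_nonneg)

lemma sesq_form_minimizer:
  assumes "quad_form_minimizer a I x"
  shows "sesq_form a I x y = of_real (quad_form a I x) * cdot x y"
proof -
  let ?l = "quad_form a I x"
  have "norm x = 1" using assms by (simp add: quad_form_minimizer_def)
  have Re_eq: "Re (sesq_form a I x y - of_real ?l * cdot x y) = 0" for y
  proof (rule linear_coeff_eq_0_if_quadratic_nonneg)
    fix t
    have "?l * (norm (x + t *\<^sub>R y))\<^sup>2 \<le> quad_form a I (x + t *\<^sub>R y)"
      using assms by (rule quad_form_minimizer_le)
    then show "0 \<le> 2 * t * Re (sesq_form a I x y - of_real ?l * cdot x y)
        + t\<^sup>2 * (quad_form a I y - ?l * (norm y)\<^sup>2)"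
      by (simp add: quad_form_add_scaleR power2_norm_add_scaleR \<open>norm x = 1\<close> algebra_simps)
  qed
  have "Im (sesq_form a I x y - of_real ?l * cdot x y) = 0"
    using Re_eq[of "\<i> *s y"] by (simp add: sesq_form_smult_right cdot_smult_right)
  with Re_eq[of y] show ?thesis by (simp add: complex_eq_iff)
qed

lemma quad_form_minimizer_add_perp:
  assumes "quad_form_minimizer a I x" and "cdot x w = 0"
  shows "quad_form a I (c *s x + w) = (cmod c)\<^sup>2 * quad_form a I x + quad_form a I w"
proof -
  have xw: "sesq_form a I x w = 0" and wx: "sesq_form a I w x = 0"
    using sesq_form_minimizer[OF assms(1), of w] assms(2) cnj_sesq_form[of a I x w] by simp_all
  have "of_real (quad_form a I (c *s x + w)) = cnj c * c * sesq_form a I x x + sesq_form a I w w"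
    by (simp add: sesq_form_self[symmetric] sesq_form_add_left sesq_form_add_right
        sesq_form_smult_left sesq_form_smult_right xw wx)
  also have "cnj c * c = of_real ((cmod c)\<^sup>2)"
    by (metis complex_norm_square mult.commute)
  finally have "of_real (quad_form a I (c *s x + w))
      = (of_real ((cmod c)\<^sup>2 * quad_form a I x + quad_form a I w) :: complex)"
    by (simp only: sesq_form_self of_real_mult of_real_add)
  then show ?thesis by (simp only: of_real_eq_iff)
qed

lemma frob_diff_power2:
  "(frob_diff x y)\<^sup>2 = (norm x)^4 + (norm y)^4 - 2 * (cmod (cdot x y))\<^sup>2"
proof -
  let ?T = "\<Sum>k\<in>UNIV. \<Sum>l\<in>UNIV. (cmod (x $ k * cnj (x $ l) - y $ k * cnj (y $ l)))\<^sup>2"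
  have yx: "cdot y x * cdot x y = of_real ((cmod (cdot x y))\<^sup>2)"
    by (metis cnj_cdot complex_norm_square mult.commute)
  have "of_real ?T = (\<Sum>k\<in>UNIV. \<Sum>l\<in>UNIV.
      (x $ k * cnj (x $ l) - y $ k * cnj (y $ l)) * cnj (x $ k * cnj (x $ l) - y $ k * cnj (y $ l)))"
    unfolding of_real_sum by (intro sum.cong refl) (metis complex_norm_square)
  also have "\<dots> = (\<Sum>k\<in>UNIV. \<Sum>l\<in>UNIV. (cnj (x $ k) * x $ k) * (cnj (x $ l) * x $ l)
       - (cnj (y $ k) * x $ k) * (cnj (x $ l) * y $ l) - (cnj (x $ k) * y $ k) * (cnj (y $ l) * x $ l)
       + (cnj (y $ k) * y $ k) * (cnj (y $ l) * y $ l))"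
    by (intro sum.cong refl) (simp add: algebra_simps)
  also have "\<dots> = cdot x x * cdot x x - cdot y x * cdot x y - cdot x y * cdot y x + cdot y y * cdot y y"
    unfolding cdot_def sum_product by (simp add: sum.distrib sum_subtractf)
  also have "\<dots> = of_real ((norm x)^4 + (norm y)^4 - 2 * (cmod (cdot x y))\<^sup>2)"
    by (simp add: cdot_self yx mult.commute[of "cdot x y"] power2_eq_square power4_eq_xxxx)
  finally have "of_real ((frob_diff x y)\<^sup>2) = (of_real ((norm x)^4 + (norm y)^4 - 2 * (cmod (cdot x y))\<^sup>2) :: complex)"
    unfolding frob_diff_def by (simp add: sum_nonneg)
  then show ?thesis by (simp only: of_real_eq_iff)
qed

lemma unit_decomposition_perp:
  assumes "norm x0 = 1" and "norm x = 1" and "cdot e x0 = 0" and "norm e = 1"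
  obtains \<beta> xp where "cdot xp x0 = 0" and "norm xp = 1"
    and "x = cdot x0 x *s x0 + \<beta> *\<^sub>R xp" and "(cmod (cdot x0 x))\<^sup>2 + \<beta>\<^sup>2 = 1"
proof -
  define \<alpha> where "\<alpha> = cdot x0 x"
  define r where "r = x - \<alpha> *s x0"
  have "cdot x0 r = 0"
    using \<open>norm x0 = 1\<close> by (simp add: r_def \<alpha>_def cdot_diff_right cdot_smult_right cdot_self)
  then have r_perp: "cdot r x0 = 0" by (metis cnj_cdot complex_cnj_zero)
  have "1 = (norm (\<alpha> *s x0 + r))\<^sup>2" using \<open>norm x = 1\<close> by (simp add: r_def)
  also have "\<dots> = (norm (\<alpha> *s x0))\<^sup>2 + (norm r)\<^sup>2"
    using \<open>cdot x0 r = 0\<close> by (intro norm_add_Pythagorean) (simp add: orthogonal_def inner_eq_Re_cdot cdot_smult_left)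
  also have "\<dots> = (cmod \<alpha>)\<^sup>2 + (norm r)\<^sup>2"
    using \<open>norm x0 = 1\<close> by (simp add: norm_smult_vec)
  finally have pyth: "(cmod \<alpha>)\<^sup>2 + (norm r)\<^sup>2 = 1" ..
  show ?thesis
  proof (cases "r = 0")
    case True
    then show ?thesis
      using that[of e 0] assms pyth by (simp add: r_def \<alpha>_def)
  next
    case False
    show ?thesis
    proof (rule that[of "(1 / norm r) *\<^sub>R r" "norm r"])
      show "x = cdot x0 x *s x0 + norm r *\<^sub>R (1 / norm r) *\<^sub>R r"
        using False by (simp add: r_def \<alpha>_def)
    qed (use False r_perp pyth in \<open>simp_all add: cdot_scaleR_left \<alpha>_def\<close>)
  qed
qed

text \<open>The remainders of \<open>x0\<close> and \<open>xp\<close> after projecting onto the eigenvector \<open>x\<close> are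
  both multiples of \<open>u = \<beta> x0 - cnj \<alpha> xp\<close>, so the form splits into a part on \<open>x\<close>
  and a common part on \<open>u\<close>.\<close>

lemma quad_form_perp_component_le:
  assumes min: "quad_form_minimizer a I x" and "norm x0 = 1"
    and "cdot xp x0 = 0" and "norm xp = 1"
    and x: "x = \<alpha> *s x0 + \<beta> *\<^sub>R xp" and pyth: "(cmod \<alpha>)\<^sup>2 + \<beta>\<^sup>2 = 1"
  shows "\<beta>\<^sup>2 * quad_form a I xp \<le> quad_form a I x0"
proof -
  define u where "u = \<beta> *\<^sub>R x0 - cnj \<alpha> *s xp"
  have "cdot x0 xp = 0" using \<open>cdot xp x0 = 0\<close> by (metis cnj_cdot complex_cnj_zero)
  have cc: "cnj \<alpha> * \<alpha> + of_real \<beta> * of_real \<beta> = 1"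
    using pyth by (metis complex_norm_square mult.commute of_real_1 of_real_add of_real_mult power2_eq_square)
  have "cdot x u = 0"
    using \<open>cdot xp x0 = 0\<close> \<open>cdot x0 xp = 0\<close> \<open>norm x0 = 1\<close> \<open>norm xp = 1\<close>
    by (simp add: x u_def cdot_add_left cdot_diff_right cdot_smult_left cdot_smult_right
        cdot_scaleR_left cdot_scaleR_right cdot_self algebra_simps)
  have x0: "x0 = cnj \<alpha> *s x + \<beta> *\<^sub>R u"
  proof -
    have "(cnj \<alpha> *s x + \<beta> *\<^sub>R u) $ k = (cnj \<alpha> * \<alpha> + of_real \<beta> * of_real \<beta>) * x0 $ k" for k
      by (simp add: x u_def scaleR_conv_of_real[where 'a = complex] algebra_simps)
    then show ?thesis by (simp add: cc vec_eq_iff)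
  qed
  have xp: "xp = of_real \<beta> *s x + (- \<alpha>) *s u"
  proof -
    have "(of_real \<beta> *s x + (- \<alpha>) *s u) $ k = (cnj \<alpha> * \<alpha> + of_real \<beta> * of_real \<beta>) * xp $ k" for k
      by (simp add: x u_def scaleR_conv_of_real[where 'a = complex] algebra_simps)
    then show ?thesis by (simp add: cc vec_eq_iff)
  qed
  have "cdot x (\<beta> *\<^sub>R u) = 0" and "cdot x ((- \<alpha>) *s u) = 0"
    using \<open>cdot x u = 0\<close> by (simp_all only: cdot_scaleR_right cdot_smult_right mult_zero_right)
  then have "quad_form a I (cnj \<alpha> *s x + \<beta> *\<^sub>R u)
      = (cmod (cnj \<alpha>))\<^sup>2 * quad_form a I x + quad_form a I (\<beta> *\<^sub>R u)"
    and "quad_form a I (of_real \<beta> *s x + (- \<alpha>) *s u)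
      = (cmod (of_real \<beta>))\<^sup>2 * quad_form a I x + quad_form a I ((- \<alpha>) *s u)"
    by (simp_all only: quad_form_minimizer_add_perp[OF min])
  then have "quad_form a I x0 = (cmod (cnj \<alpha>))\<^sup>2 * quad_form a I x + quad_form a I (\<beta> *\<^sub>R u)"
    and "quad_form a I xp = (cmod (of_real \<beta>))\<^sup>2 * quad_form a I x + quad_form a I ((- \<alpha>) *s u)"
    by (simp_all only: flip: x0 xp)
  then have Q_x0: "quad_form a I x0 = (cmod \<alpha>)\<^sup>2 * quad_form a I x + \<beta>\<^sup>2 * quad_form a I u"
    and Q_xp: "quad_form a I xp = \<beta>\<^sup>2 * quad_form a I x + (cmod \<alpha>)\<^sup>2 * quad_form a I u"
    by (simp_all only: quad_form_scaleR quad_form_smult norm_minus_cancel complex_mod_cnj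
        norm_of_real power2_abs)
  define l q where "l = quad_form a I x" and "q = quad_form a I u"
  have A: "(cmod \<alpha>)\<^sup>2 = 1 - \<beta>\<^sup>2" using pyth by simp
  have "l \<le> quad_form a I x0"
    using min \<open>norm x0 = 1\<close> by (simp add: quad_form_minimizer_def l_def)
  then have "\<beta>\<^sup>2 * l \<le> \<beta>\<^sup>2 * q" by (simp add: Q_x0 A l_def q_def algebra_simps)
  then have "\<beta>\<^sup>2 * (\<beta>\<^sup>2 * l) \<le> \<beta>\<^sup>2 * (\<beta>\<^sup>2 * q)" by (rule mult_left_mono) simp
  moreover have "0 \<le> (cmod \<alpha>)\<^sup>2 * l" by (simp add: l_def quad_form_nonneg)
  ultimately show ?thesis
    unfolding Q_x0 Q_xp l_def[symmetric] q_def[symmetric] A by (simp add: algebra_simps)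
qed

lemma exists_unit_perp_quad_form_small:
  assumes "cdot xp x0 = 0" and "norm xp = 1" and "quad_form a I xp = 0"
    and "cdot e x0 = 0" and "norm e = 1" and "quad_form a I e > 0" and "b > 0"
  obtains xq where "cdot xq x0 = 0" and "norm xq = 1"
    and "0 < quad_form a I xq" and "quad_form a I xq \<le> b"
proof -
  define Qe where "Qe = quad_form a I e"
  define s where "s = min (1/2) (sqrt (b / (8 * Qe)))"
  have "Qe > 0" using assms(6) by (simp add: Qe_def)
  have "0 < s" "s \<le> 1/2" using \<open>Qe > 0\<close> \<open>b > 0\<close> by (simp_all add: s_def)
  have "s\<^sup>2 \<le> (sqrt (b / (8 * Qe)))\<^sup>2"
    using \<open>0 < s\<close> by (intro power_mono) (simp_all add: s_def)
  then have s2: "s\<^sup>2 * Qe \<le> b / 8" using \<open>Qe > 0\<close> \<open>b > 0\<close> by (simp add: field_simps)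
  define v where "v = xp + s *\<^sub>R e"
  have "quad_form a I v \<le> 2 * quad_form a I xp + 2 * quad_form a I (s *\<^sub>R e)"
    unfolding v_def by (rule quad_form_add_le)
  then have Qv_le: "quad_form a I v \<le> 2 * s\<^sup>2 * Qe"
    using assms(3) by (simp add: quad_form_scaleR Qe_def)
  have "quad_form a I (s *\<^sub>R e) \<le> 2 * quad_form a I v + 2 * quad_form a I ((-1) *\<^sub>R xp)"
    using quad_form_add_le[of a I v "(-1) *\<^sub>R xp"] by (simp add: v_def)
  moreover have "quad_form a I ((-1) *\<^sub>R xp) = 0"
    using assms(3) by (simp only: quad_form_scaleR mult_zero_right)
  ultimately have "s\<^sup>2 * Qe \<le> 2 * quad_form a I v"
    by (simp add: quad_form_scaleR Qe_def)
  then have Qv_pos: "quad_form a I v > 0"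
    using \<open>0 < s\<close> \<open>Qe > 0\<close> by (smt (verit) mult_pos_pos zero_less_power)
  have "1 - s \<le> norm v"
    using norm_triangle_ineq2[of xp "- s *\<^sub>R e"] \<open>0 < s\<close> assms(2,5) by (simp add: v_def)
  then have nv: "1/2 \<le> norm v" using \<open>s \<le> 1/2\<close> by simp
  show ?thesis
  proof (rule that[of "(1 / norm v) *\<^sub>R v"])
    show "cdot ((1 / norm v) *\<^sub>R v) x0 = 0"
      using assms(1,4) by (simp add: v_def cdot_scaleR_left cdot_add_left)
    show "norm ((1 / norm v) *\<^sub>R v) = 1" using nv by auto
    have Q: "quad_form a I ((1 / norm v) *\<^sub>R v) = quad_form a I v / (norm v)\<^sup>2"
      by (simp add: quad_form_scaleR power_divide)
    show "0 < quad_form a I ((1 / norm v) *\<^sub>R v)"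
      unfolding Q using Qv_pos nv by (intro divide_pos_pos) auto
    have "1 \<le> (2 * norm v)\<^sup>2" using power_mono[of 1 "2 * norm v" 2] nv by simp
    then have "quad_form a I v * 1 \<le> quad_form a I v * (4 * (norm v)\<^sup>2)"
      using Qv_pos by (intro mult_left_mono) (auto simp: power_mult_distrib)
    then have "quad_form a I v / (norm v)\<^sup>2 \<le> 4 * quad_form a I v"
      using nv by (subst pos_divide_le_eq) (auto simp: algebra_simps)
    then show "quad_form a I ((1 / norm v) *\<^sub>R v) \<le> b"
      unfolding Q using Qv_le s2 by linarith
  qed
qed

lemma minimizer_frob_diff_bound:
  assumes min: "quad_form_minimizer a I x" and "norm x0 = 1"
    and "cdot e x0 = 0" and "norm e = 1" and "quad_form a I e > 0" and "quad_form a I x0 > 0"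
  shows "\<exists>xp. cdot xp x0 = 0 \<and> norm xp = 1 \<and>
    (1/4) * (frob_diff x0 x)\<^sup>2 \<le> quad_form a I x0 / quad_form a I xp"
proof -
  have "norm x = 1" using min by (simp add: quad_form_minimizer_def)
  obtain \<beta> xp where xp: "cdot xp x0 = 0" "norm xp = 1"
    and x: "x = cdot x0 x *s x0 + \<beta> *\<^sub>R xp" and pyth: "(cmod (cdot x0 x))\<^sup>2 + \<beta>\<^sup>2 = 1"
    using unit_decomposition_perp[OF \<open>norm x0 = 1\<close> \<open>norm x = 1\<close> assms(3,4)] .
  have frob: "(1/4) * (frob_diff x0 x)\<^sup>2 = \<beta>\<^sup>2 / 2"
    using pyth by (simp add: frob_diff_power2 \<open>norm x0 = 1\<close> \<open>norm x = 1\<close>)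
  have "\<beta>\<^sup>2 \<le> 1" using pyth by (smt (verit) zero_le_power2)
  show ?thesis
  proof (cases "quad_form a I xp > 0")
    case True
    have "\<beta>\<^sup>2 * quad_form a I xp \<le> quad_form a I x0"
      using quad_form_perp_component_le[OF min \<open>norm x0 = 1\<close> xp x pyth] .
    then have "\<beta>\<^sup>2 / 2 \<le> quad_form a I x0 / quad_form a I xp"
      using True quad_form_nonneg[of a I x0] by (simp add: field_simps)
    then show ?thesis using xp frob by auto
  next
    case False
    \<comment> \<open>Then the quotient for xp is 0 by the convention x / 0 = 0, so another direction is needed.\<close>
    then have "quad_form a I xp = 0" using quad_form_nonneg[of a I xp] by simp
    then obtain xq where xq: "cdot xq x0 = 0" "norm xq = 1"
      and Q_xq: "0 < quad_form a I xq" "quad_form a I xq \<le> 2 * quad_form a I x0"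
      using exists_unit_perp_quad_form_small[OF xp _ assms(3-5), of "2 * quad_form a I x0"]
        assms(6) by auto
    have "quad_form a I xq * \<beta>\<^sup>2 \<le> quad_form a I xq"
      using \<open>\<beta>\<^sup>2 \<le> 1\<close> Q_xq(1) by (intro mult_left_le) auto
    then have "quad_form a I xq * \<beta>\<^sup>2 \<le> 2 * quad_form a I x0"
      using Q_xq(2) by linarith
    then have "\<beta>\<^sup>2 / 2 \<le> quad_form a I x0 / quad_form a I xq"
      using Q_xq(1) by (simp add: field_simps)
    then show ?thesis using xq frob by auto
  qed
qed

lemma AE_PiM_component_ne:
  fixes M :: "real measure" and g :: "('i \<Rightarrow> real) \<Rightarrow> real"
  assumes fin: "finite J" and i: "i \<in> J"
    and sf: "sigma_finite_measure M" and sets_M: "sets M = sets borel"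
    and no_atoms: "\<And>y. emeasure M {y} = 0"
    and g: "g \<in> borel_measurable (PiM J (\<lambda>_. M))"
    and g_indep: "\<And>w y. g (w(i := y)) = g w"
  shows "AE w in PiM J (\<lambda>_. M). w i \<noteq> g w"
proof -
  interpret product_sigma_finite "\<lambda>_. M"
    using sf by (simp add: product_sigma_finite_def)
  define B where "B = {w \<in> space (PiM J (\<lambda>_. M)). w i = g w}"
  have "(\<lambda>w. w i) \<in> borel_measurable (PiM J (\<lambda>_. M))"
    using measurable_component_singleton[OF i, of "\<lambda>_. M"]
    by (simp add: measurable_cong_sets[OF refl sets_M])
  then have B: "B \<in> sets (PiM J (\<lambda>_. M))"
    unfolding B_def using g by (rule borel_measurable_eq)
  have J: "J = insert i (J - {i})" using i by auto
  have "emeasure (PiM J (\<lambda>_. M)) B = (\<integral>\<^sup>+ w. indicator B w \<partial>PiM J (\<lambda>_. M))"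
    using B by simp
  also have "\<dots> = (\<integral>\<^sup>+ w. (\<integral>\<^sup>+ y. indicator B (w(i := y)) \<partial>M) \<partial>PiM (J - {i}) (\<lambda>_. M))"
    using fin B J product_nn_integral_insert[of "J - {i}" i "indicator B"]
    by (simp del: insert_Diff_single)
  also have "\<dots> = 0"
  proof (rule nn_integral_zero')
    have "(\<integral>\<^sup>+ y. indicator B (w(i := y)) \<partial>M) \<le> emeasure M {g w}" for w
    proof -
      have "(\<integral>\<^sup>+ y. indicator B (w(i := y)) \<partial>M) \<le> (\<integral>\<^sup>+ y. indicator {g w} y \<partial>M)"
        by (rule nn_integral_mono) (auto simp: B_def indicator_def g_indep)
      then show ?thesis using sets_M by simp
    qed
    then show "AE w in PiM (J - {i}) (\<lambda>_. M). (\<integral>\<^sup>+ y. indicator B (w(i := y)) \<partial>M) = 0"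
      using no_atoms by (simp add: le_zero_eq)
  qed
  finally have "B \<in> null_sets (PiM J (\<lambda>_. M))" using B by auto
  then show ?thesis by (rule AE_I') (auto simp: B_def)
qed

lemma cnj_col_component:
  "cnj (col \<omega> j $ l) = of_real (\<omega> (j, l, True)) - \<i> * of_real (\<omega> (j, l, False))"
  by (simp add: col_def complex_eq_iff)

lemma std_normal_no_atoms: "emeasure (density lborel std_normal_density) {y} = 0"
  by (subst emeasure_density) (auto intro!: nn_integral_null_set)

lemma AE_cdot_col_ne_zero:
  fixes w :: "complex^'n"
  assumes "w \<noteq> 0" and "j < N"
  shows "AE \<omega> in gauss_space N. cdot (col \<omega> j) w \<noteq> 0"
proof -
  obtain k where k: "w $ k \<noteq> 0" using \<open>w \<noteq> 0\<close> by (metis vec_eq_iff zero_index)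
  define J where "J = {..<N} \<times> (UNIV :: 'n set) \<times> (UNIV :: bool set)"
  define D where "D = density lborel std_normal_density"
  define i where "i = (j, k, True)"
  define rest where "rest \<omega> = (\<Sum>l\<in>UNIV - {k}. cnj (col \<omega> j $ l) * w $ l)
      - \<i> * of_real (\<omega> (j, k, False)) * w $ k" for \<omega> :: "nat \<times> 'n \<times> bool \<Rightarrow> real"
  have cdot_eq: "cdot (col \<omega> j) w = of_real (\<omega> i) * w $ k + rest \<omega>" for \<omega>
    unfolding cdot_def rest_def i_def
    by (simp add: sum.remove[of UNIV k] cnj_col_component algebra_simps)
  have [measurable]: "(\<lambda>\<omega>. \<omega> (j, l, b)) \<in> borel_measurable (PiM J (\<lambda>_. D))" for l b
    using measurable_component_singleton[of "(j, l, b)" J "\<lambda>_. D"] \<open>j < N\<close>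
    by (simp add: J_def D_def measurable_cong_sets[OF refl sets_density])
  have "(\<lambda>\<omega>. Re (- rest \<omega> / w $ k)) \<in> borel_measurable (PiM J (\<lambda>_. D))"
    unfolding rest_def cnj_col_component by measurable
  moreover have "rest (\<omega> (i := y)) = rest \<omega>" for \<omega> y
    unfolding rest_def cnj_col_component i_def by (auto intro!: sum.cong)
  moreover have "sigma_finite_measure D"
    unfolding D_def by (intro prob_space_imp_sigma_finite prob_space_normal_density) simp
  ultimately have "AE \<omega> in PiM J (\<lambda>_. D). \<omega> i \<noteq> Re (- rest \<omega> / w $ k)"
    using \<open>j < N\<close> by (intro AE_PiM_component_ne) (auto simp: J_def i_def D_def std_normal_no_atoms)
  then show ?thesis
    unfolding gauss_space_def J_def[symmetric] D_def[symmetric]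
  proof (rule eventually_mono)
    fix \<omega> assume "\<omega> i \<noteq> Re (- rest \<omega> / w $ k)"
    then have "of_real (\<omega> i) \<noteq> - rest \<omega> / w $ k"
      by (metis Re_complex_of_real)
    then show "cdot (col \<omega> j) w \<noteq> 0"
      using k by (auto simp: cdot_eq field_simps add_eq_0_iff)
  qed
qed

theorem proposition1:
  fixes x0 :: "complex^'n" and N :: nat
  assumes "CARD('n) \<ge> 2" and "norm x0 = 1"
  shows "AE \<omega> in gauss_space N.
    \<forall>I xnull.
      (I \<subseteq> {..<N} \<and> I \<noteq> {} \<and>
       (\<forall>i\<in>I. \<forall>j\<in>{..<N} - I. bvec \<omega> x0 i \<le> bvec \<omega> x0 j) \<and>
       norm xnull = norm x0 \<and>
       (\<forall>x. norm x = norm x0 \<longrightarrow> AIx_sq \<omega> I xnull \<le> AIx_sq \<omega> I x))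
      \<longrightarrow> (\<exists>xp. cdot xp x0 = 0 \<and> norm xp = norm x0 \<and>
             (1/4) * (frob_diff x0 xnull)\<^sup>2
               \<le> (\<Sum>i\<in>I. (bvec \<omega> x0 i)\<^sup>2) / AIx_sq \<omega> I xp)"
proof -
  have "x0 \<noteq> 0" using assms(2) by auto
  \<comment> \<open>e must not depend on \<omega>: the exceptional null sets are collected before choosing I and xnull.\<close>
  obtain e where e: "cdot e x0 = 0" "norm e = 1"
    using exists_unit_cdot_eq_0[OF assms(1) \<open>x0 \<noteq> 0\<close>] .
  then have "e \<noteq> 0" by auto
  have "AE \<omega> in gauss_space N. \<forall>j\<in>{..<N}. cdot (col \<omega> j) e \<noteq> 0 \<and> cdot (col \<omega> j) x0 \<noteq> 0"
    using AE_cdot_col_ne_zero[OF \<open>e \<noteq> 0\<close>] AE_cdot_col_ne_zero[OF \<open>x0 \<noteq> 0\<close>]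
    by (intro AE_finite_allI) auto
  then show ?thesis
  proof (rule eventually_mono, intro allI impI, elim conjE)
    \<comment> \<open>The bound holds for every nonempty I.\<close>
    fix \<omega> I xnull
    assume generic: "\<forall>j\<in>{..<N}. cdot (col \<omega> j) e \<noteq> 0 \<and> cdot (col \<omega> j) x0 \<noteq> 0"
      and I: "I \<subseteq> {..<N}" "I \<noteq> {}" and "norm xnull = norm x0"
      and "\<forall>x. norm x = norm x0 \<longrightarrow> AIx_sq \<omega> I xnull \<le> AIx_sq \<omega> I x"
    then have min: "quad_form_minimizer (col \<omega>) I xnull"
      using assms(2) by (simp add: quad_form_minimizer_def AIx_sq_def quad_form_def)
    moreover obtain i where "i \<in> I" using I by auto
    moreover have "finite I" using I finite_subset by blast
    ultimately have "quad_form (col \<omega>) I e > 0" and "quad_form (col \<omega>) I x0 > 0"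
      using generic I by (auto intro!: quad_form_pos)
    then have "\<exists>xp. cdot xp x0 = 0 \<and> norm xp = 1 \<and> (1/4) * (frob_diff x0 xnull)\<^sup>2
        \<le> quad_form (col \<omega>) I x0 / quad_form (col \<omega>) I xp"
      using minimizer_frob_diff_bound[OF min assms(2) e] by blast
    then show "\<exists>xp. cdot xp x0 = 0 \<and> norm xp = norm x0 \<and> (1/4) * (frob_diff x0 xnull)\<^sup>2
        \<le> (\<Sum>i\<in>I. (bvec \<omega> x0 i)\<^sup>2) / AIx_sq \<omega> I xp"
      using assms(2) by (simp add: AIx_sq_def bvec_def quad_form_def)
  qed
qed

end
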